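(* Let $(A,B)$ be a Katsura pair with KEP-action $(G_B,E_A)$, and let $E^0_{A,<\infty}=\{i\in E^0_A:(G_B)_i\text{ is finite}\}$. If $e\in E_A^1$ satisfies $B_e\ne0$ and $r(e)\in E^0_{A,<\infty}$, then $s(e)\in E^0_{A,<\infty}$.
   Context: Katsura pair: $N\in\mathbb{N}$, $A\in M_N(\mathbb{N})$ (nonnegative integers), $B\in M_N(\mathbb{Z})$ with $A_{ij}=0\Rightarrow B_{ij}=0$. Graph $E_A$: vertices $\{1,\dots,N\}$, edges $e_{i,j,m}$ ($0\le m<A_{ij}$), $r=i$, $s=j$; for an edge $e$, $B_e=B_{r(e)s(e)}$. The group bundle $\mathbb{Z}\times E_A^0$ (elements $a_i^k$, $a_i^ka_i^l=a_i^{k+l}$) acts on finite paths by $a_i^k\cdot e_{i,j,m}=e_{i,j,\hat m}$, $a_i^k|_{e_{i,j,m}}=a_j^{\hat k}$ where $kB_{ij}+m=\hat kA_{ij}+\hat m$, $0\le\hat m<A_{ij}$, extended recursively by $g\cdot(e\nu)=(g\cdot e)(g|_e\cdot\nu)$. $G_B$ is the quotient by the elements acting trivially (the KEP-action $(G_B,E_A)$), and $(G_B)_i$ is the cyclic group of elements of $G_B$ at the vertex $i$. *)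

theory Defs
  imports Main
begin

text \<open>Matrices over vertices 1..N are functions nat => nat => _ (only entries with
indices in 1..N are relevant). An edge e_{i,j,m} is the triple (i,j,m); r = i, s = j.\<close>

type_synonym edge = "nat \<times> nat \<times> nat"

definition katsura_pair :: "nat \<Rightarrow> (nat \<Rightarrow> nat \<Rightarrow> nat) \<Rightarrow> (nat \<Rightarrow> nat \<Rightarrow> int) \<Rightarrow> bool" where
  "katsura_pair N A B \<longleftrightarrow> N \<ge> 1 \<and>
     (\<forall>i\<in>{1..N}. \<forall>j\<in>{1..N}. A i j = 0 \<longrightarrow> B i j = 0)"

definition e_range :: "edge \<Rightarrow> nat" where "e_range e = fst e"
definition e_source :: "edge \<Rightarrow> nat" where "e_source e = fst (snd e)"

definition is_edge :: "nat \<Rightarrow> (nat \<Rightarrow> nat \<Rightarrow> nat) \<Rightarrow> edge \<Rightarrow> bool" where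
  "is_edge N A e \<longleftrightarrow> (case e of (i, j, m) \<Rightarrow> i \<in> {1..N} \<and> j \<in> {1..N} \<and> m < A i j)"

fun chain :: "edge list \<Rightarrow> bool" where
  "chain [] = True"
| "chain [e] = True"
| "chain (e # f # p) \<longleftrightarrow> e_source e = e_range f \<and> chain (f # p)"

definition is_path :: "nat \<Rightarrow> (nat \<Rightarrow> nat \<Rightarrow> nat) \<Rightarrow> edge list \<Rightarrow> bool" where
  "is_path N A p \<longleftrightarrow> p \<noteq> [] \<and> (\<forall>e\<in>set p. is_edge N A e) \<and> chain p"

text \<open>Action of a_{r(p)}^k on a path p (a_i^k acts on paths with range i; vertices are fixed):
 a_i^k . e_{i,j,m} = e_{i,j,m'}, a_i^k|_{e} = a_j^{k'} where k B_ij + m = k' A_ij + m', 0 <= m' < A_ij,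
 and g.(e nu) = (g.e)(g|_e . nu).\<close>
fun kep_act :: "(nat \<Rightarrow> nat \<Rightarrow> nat) \<Rightarrow> (nat \<Rightarrow> nat \<Rightarrow> int) \<Rightarrow> int \<Rightarrow> edge list \<Rightarrow> edge list" where
  "kep_act A B k [] = []"
| "kep_act A B k ((i, j, m) # p) =
     (let t = k * B i j + int m
      in (i, j, nat (t mod int (A i j))) # kep_act A B (t div int (A i j)) p)"

text \<open>(G_B)_i: the cyclic group {a_i^k : k in Z} modulo the elements acting trivially,
i.e. a_i^k and a_i^l are identified iff they act identically on all paths with range i.\<close>
definition vertex_group :: "nat \<Rightarrow> (nat \<Rightarrow> nat \<Rightarrow> nat) \<Rightarrow> (nat \<Rightarrow> nat \<Rightarrow> int) \<Rightarrow> nat \<Rightarrow> int set set" where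
  "vertex_group N A B i = (UNIV :: int set) //
     {(k, l). \<forall>p. is_path N A p \<and> e_range (hd p) = i \<longrightarrow> kep_act A B k p = kep_act A B l p}"

definition finite_vertices :: "nat \<Rightarrow> (nat \<Rightarrow> nat \<Rightarrow> nat) \<Rightarrow> (nat \<Rightarrow> nat \<Rightarrow> int) \<Rightarrow> nat set" where
  "finite_vertices N A B = {i \<in> {1..N}. finite (vertex_group N A B i)}"

definition B_edge :: "(nat \<Rightarrow> nat \<Rightarrow> int) \<Rightarrow> edge \<Rightarrow> int" where
  "B_edge B e = B (e_range e) (e_source e)"

end

theory Submission
  imports Defs
begin

text \<open>
  \<open>(G_B)\<^sub>i\<close> is the cyclic group generated by \<open>a\<^sub>i\<close>, so it is finite exactly when some
  power \<open>a\<^sub>i\<^sup>d\<close> with \<open>d \<noteq> 0\<close> acts trivially on the paths with range \<open>i\<close>.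
  If it does, so does \<open>a\<^sub>i\<^bsup>d A\<^sub>i\<^sub>j\<^esup>\<close>; since \<open>d A\<^sub>i\<^sub>j B\<^sub>i\<^sub>j = (d B\<^sub>i\<^sub>j) A\<^sub>i\<^sub>j + 0\<close>, this power
  fixes the edge \<open>e\<^sub>i\<^sub>,\<^sub>j\<^sub>,\<^sub>0\<close> and restricts to \<open>a\<^sub>j\<^bsup>d B\<^sub>i\<^sub>j\<^esup>\<close> on whatever follows it.
  Hence \<open>a\<^sub>j\<^bsup>d B\<^sub>i\<^sub>j\<^esup>\<close> acts trivially, and it is a nonzero power when \<open>B\<^sub>i\<^sub>j \<noteq> 0\<close>.
\<close>

lemma kep_act_zero:
  assumes "\<forall>(i, j, m) \<in> set p. m < A i j"
  shows "kep_act A B 0 p = p"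
  using assms by (induction p) (auto simp: Let_def)

lemma kep_act_add:
  assumes "\<forall>(i, j, m) \<in> set p. m < A i j"
  shows "kep_act A B (k + l) p = kep_act A B k (kep_act A B l p)"
  using assms
proof (induction p arbitrary: k l)
  case Nil
  then show ?case by simp
next
  case (Cons e p)
  obtain i j m where e: "e = (i, j, m)" by (cases e)
  define a where "a = int (A i j)"
  define t where "t = l * B i j + int m"
  have "0 < a" using Cons.prems e a_def by auto
  have split: "(k + l) * B i j + int m = (k * B i j + t mod a) + (t div a) * a"
    by (simp add: t_def algebra_simps)
  have "((k + l) * B i j + int m) mod a = (k * B i j + t mod a) mod a"
    unfolding split by (rule mod_mult_self1)
  moreover have "((k + l) * B i j + int m) div a = (k * B i j + t mod a) div a + t div a"
    using \<open>0 < a\<close> unfolding split by (metis add.commute div_mult_self1 less_irrefl)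
  moreover have "int (nat (t mod a)) = t mod a" using \<open>0 < a\<close> by simp
  ultimately show ?case
    using Cons e by (simp add: Let_def a_def t_def)
qed

lemma kep_act_edges:
  assumes "\<forall>e \<in> set p. is_edge N A e"
  shows "\<forall>e \<in> set (kep_act A B k p). is_edge N A e"
  using assms
proof (induction p arbitrary: k)
  case Nil
  then show ?case by simp
next
  case (Cons e p)
  obtain i j m where e: "e = (i, j, m)" by (cases e)
  have "0 < int (A i j)" using Cons.prems e by (auto simp: is_edge_def)
  then have "nat ((k * B i j + int m) mod int (A i j)) < A i j"
    by (simp add: nat_less_iff)
  then show ?case using Cons e by (auto simp: Let_def is_edge_def)
qed

lemma chain_kep_act: "chain (kep_act A B k p) = chain p"
  by (induction p arbitrary: k rule: chain.induct)
     (auto simp: Let_def e_source_def e_range_def)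

lemma e_range_hd_kep_act: "e_range (hd (kep_act A B k p)) = e_range (hd p)"
  by (cases p) (auto simp: Let_def e_range_def)

definition range_paths :: "nat \<Rightarrow> (nat \<Rightarrow> nat \<Rightarrow> nat) \<Rightarrow> nat \<Rightarrow> edge list set" where
  "range_paths N A i = {p. is_path N A p \<and> e_range (hd p) = i}"

definition acts_trivially ::
    "nat \<Rightarrow> (nat \<Rightarrow> nat \<Rightarrow> nat) \<Rightarrow> (nat \<Rightarrow> nat \<Rightarrow> int) \<Rightarrow> nat \<Rightarrow> int \<Rightarrow> bool" where
  "acts_trivially N A B i k \<longleftrightarrow> (\<forall>p \<in> range_paths N A i. kep_act A B k p = p)"

lemma labels_bounded_if_path:
  assumes "is_path N A p"
  shows "\<forall>(i, j, m) \<in> set p. m < A i j"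
  using assms by (auto simp: is_path_def is_edge_def)

lemma kep_act_range_paths:
  assumes "p \<in> range_paths N A i"
  shows "kep_act A B k p \<in> range_paths N A i"
proof -
  have "kep_act A B k p \<noteq> []" using assms by (cases p) (auto simp: range_paths_def is_path_def Let_def)
  then show ?thesis
    using assms kep_act_edges[of p N A B k]
    by (simp add: range_paths_def is_path_def chain_kep_act e_range_hd_kep_act)
qed

lemma range_paths_kep_act_zero: "p \<in> range_paths N A i \<Longrightarrow> kep_act A B 0 p = p"
  unfolding range_paths_def using kep_act_zero labels_bounded_if_path by blast

lemma range_paths_kep_act_add:
  "p \<in> range_paths N A i \<Longrightarrow> kep_act A B (k + l) p = kep_act A B k (kep_act A B l p)"
  unfolding range_paths_def using kep_act_add labels_bounded_if_path by blast

lemma acts_trivially_add: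
  assumes "acts_trivially N A B i k" and "p \<in> range_paths N A i"
  shows "kep_act A B (l + k) p = kep_act A B l p"
  using assms by (simp add: range_paths_kep_act_add acts_trivially_def)

lemma acts_trivially_dvd:
  assumes "acts_trivially N A B i d" and "d dvd k"
  shows "acts_trivially N A B i k"
proof -
  obtain n where "k = d * n" using assms(2) by blast
  have "acts_trivially N A B i (d * n)"
  proof (induction n rule: int_induct[where k = 0])
    case base
    then show ?case by (simp add: acts_trivially_def range_paths_kep_act_zero)
  next
    case (step1 n)
    then show ?case
      using acts_trivially_add[OF assms(1)] by (simp add: acts_trivially_def distrib_left)
  next
    case (step2 n)
    have "d * n = d * (n - 1) + d" by (simp add: algebra_simps)
    then show ?case
      using step2 acts_trivially_add[OF assms(1)] by (simp add: acts_trivially_def)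
  qed
  then show ?thesis using \<open>k = d * n\<close> by simp
qed

lemma same_action_iff_acts_trivially:
  "(\<forall>p \<in> range_paths N A i. kep_act A B k p = kep_act A B l p) \<longleftrightarrow> acts_trivially N A B i (k - l)"
proof
  assume same: "\<forall>p \<in> range_paths N A i. kep_act A B k p = kep_act A B l p"
  show "acts_trivially N A B i (k - l)"
    unfolding acts_trivially_def
  proof
    fix p assume p: "p \<in> range_paths N A i"
    have "kep_act A B (k - l) p = kep_act A B k (kep_act A B (- l) p)"
      using range_paths_kep_act_add[OF p, where k = k and l = "- l"] by simp
    also have "\<dots> = kep_act A B l (kep_act A B (- l) p)"
      using same kep_act_range_paths[OF p] by blast
    also have "\<dots> = p"
      using range_paths_kep_act_add[OF p, where k = l and l = "- l"] range_paths_kep_act_zero[OF p] by simp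
    finally show "kep_act A B (k - l) p = p" .
  qed
next
  assume "acts_trivially N A B i (k - l)"
  then have "\<forall>p \<in> range_paths N A i. kep_act A B (l + (k - l)) p = kep_act A B l p"
    using acts_trivially_add by blast
  then show "\<forall>p \<in> range_paths N A i. kep_act A B k p = kep_act A B l p"
    by simp
qed

lemma vertex_group_eq_quotient:
  "vertex_group N A B i = UNIV // {(k, l). acts_trivially N A B i (k - l)}"
  using same_action_iff_acts_trivially[of N A i B]
  by (simp add: vertex_group_def range_paths_def)

lemma finite_vertex_group_iff:
  "finite (vertex_group N A B i) \<longleftrightarrow> (\<exists>d. d \<noteq> 0 \<and> acts_trivially N A B i d)"
proof -
  define R where "R = {(k, l). acts_trivially N A B i (k - l)}"
  have quotient: "vertex_group N A B i = range (\<lambda>k. R `` {k})"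
    unfolding vertex_group_eq_quotient R_def[symmetric] by (auto simp: quotient_def)
  show ?thesis
  proof
    assume "finite (vertex_group N A B i)"
    then have "\<not> inj (\<lambda>k. R `` {k})"
      unfolding quotient using finite_imageD infinite_UNIV_int by metis
    then obtain k l where "k \<noteq> l" "R `` {k} = R `` {l}"
      unfolding inj_def by blast
    moreover have "(k, k) \<in> R"
      by (simp add: R_def acts_trivially_def range_paths_kep_act_zero)
    ultimately have "acts_trivially N A B i (k - l)" "k - l \<noteq> 0"
      unfolding R_def by auto
    then show "\<exists>d. d \<noteq> 0 \<and> acts_trivially N A B i d" by blast
  next
    assume "\<exists>d. d \<noteq> 0 \<and> acts_trivially N A B i d"
    then obtain d where "d \<noteq> 0" and d: "acts_trivially N A B i d" by blast
    have class_mod: "R `` {k} = R `` {k mod \<bar>d\<bar>}" for k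
    proof -
      have "acts_trivially N A B i (k - k mod \<bar>d\<bar>)"
        using acts_trivially_dvd[OF d] dvd_minus_mod[of "\<bar>d\<bar>" k] by (simp only: abs_dvd_iff)
      then have same: "\<forall>p \<in> range_paths N A i. kep_act A B k p = kep_act A B (k mod \<bar>d\<bar>) p"
        by (simp only: same_action_iff_acts_trivially)
      have "acts_trivially N A B i (k - l) \<longleftrightarrow> acts_trivially N A B i (k mod \<bar>d\<bar> - l)" for l
        unfolding same_action_iff_acts_trivially[symmetric] using same by auto
      then show ?thesis unfolding R_def by auto
    qed
    have "vertex_group N A B i \<subseteq> (\<lambda>k. R `` {k}) ` {0..<\<bar>d\<bar>}"
    proof
      fix X assume "X \<in> vertex_group N A B i"
      then obtain k where "X = R `` {k}"
        unfolding quotient by blast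
      then have "X = R `` {k mod \<bar>d\<bar>}"
        using class_mod[of k] by (rule trans)
      moreover have "k mod \<bar>d\<bar> \<in> {0..<\<bar>d\<bar>}" using \<open>d \<noteq> 0\<close> by simp
      ultimately show "X \<in> (\<lambda>k. R `` {k}) ` {0..<\<bar>d\<bar>}" by blast
    qed
    then show "finite (vertex_group N A B i)"
      by (rule finite_subset) simp
  qed
qed

lemma kep_act_Cons_multiple:
  assumes "0 < A i j"
  shows "kep_act A B (n * int (A i j)) ((i, j, 0) # q) = (i, j, 0) # kep_act A B (n * B i j) q"
  using assms by (simp add: Let_def mult.commute mult.left_commute)

lemma acts_trivially_source:
  assumes "is_edge N A (i, j, m)" and "acts_trivially N A B i d"
  shows "acts_trivially N A B j (d * B i j)"
  unfolding acts_trivially_def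
proof
  fix q assume q: "q \<in> range_paths N A j"
  have "0 < A i j" and "is_edge N A (i, j, 0)"
    using assms(1) by (auto simp: is_edge_def)
  moreover have "chain ((i, j, 0) # q)"
    using q by (cases q) (auto simp: range_paths_def is_path_def e_source_def)
  ultimately have "(i, j, 0) # q \<in> range_paths N A i"
    using q by (auto simp: range_paths_def is_path_def e_range_def)
  moreover have "acts_trivially N A B i (d * int (A i j))"
    using acts_trivially_dvd[OF assms(2)] by simp
  ultimately have "kep_act A B (d * int (A i j)) ((i, j, 0) # q) = (i, j, 0) # q"
    unfolding acts_trivially_def by blast
  then show "kep_act A B (d * B i j) q = q"
    using kep_act_Cons_multiple[where A = A and i = i and j = j, OF \<open>0 < A i j\<close>] by simp
qed

theorem corollary3p1:
  fixes N :: nat and A :: "nat \<Rightarrow> nat \<Rightarrow> nat" and B :: "nat \<Rightarrow> nat \<Rightarrow> int" and e :: edge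
  assumes "katsura_pair N A B"
    and "is_edge N A e"
    and "B_edge B e \<noteq> 0"
    and "e_range e \<in> finite_vertices N A B"
  shows "e_source e \<in> finite_vertices N A B"
proof -
  obtain i j m where e: "e = (i, j, m)" by (cases e)
  have edge: "is_edge N A (i, j, m)" and "B i j \<noteq> 0"
    using assms(2,3) by (simp_all add: e B_edge_def e_range_def e_source_def)
  obtain d where "d \<noteq> 0" and "acts_trivially N A B i d"
    using assms(4) by (auto simp: e e_range_def finite_vertices_def finite_vertex_group_iff)
  then have "d * B i j \<noteq> 0" and "acts_trivially N A B j (d * B i j)"
    using \<open>B i j \<noteq> 0\<close> acts_trivially_source[OF edge] by simp_all
  then have "finite (vertex_group N A B j)"
    using finite_vertex_group_iff by blast
  then show ?thesis
    using edge by (simp add: e e_source_def finite_vertices_def is_edge_def)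
qed

end
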